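(* Let $(V_n)_{n\ge1}$ be a sequence in $\mathcal{V}$ with $M:=\limsup_{n\to\infty}\mathcal{L}_{V_n}(0)>0$. Then $(\mathcal{L}_{V_n})_{n\ge1}$ has a pre-cutoff if and only if $(\mathcal{L}_{V_n})_{n\ge1}$ has a cutoff.
   Context: $\mathcal{V}$ denotes the class of all non-decreasing, right-continuous functions $V:(0,\infty)\to\mathbb{R}$ with $\lim_{\lambda\to0^+}V(\lambda)=0$ and $\lim_{\lambda\to\infty}V(\lambda)<\infty$; for $V\in\mathcal{V}$, $\mathcal{L}_V(t)=\int_{(0,\infty)}e^{-t\lambda}dV(\lambda)$ ($t\ge0$, Lebesgue–Stieltjes integral). With $M=\limsup_n\mathcal{L}_{V_n}(0)>0$: the sequence $(\mathcal{L}_{V_n})$ has a pre-cutoff if there exist $t_n>0$ and constants $0<A<B$ with $\lim_n\mathcal{L}_{V_n}(Bt_n)=0$ and $\liminf_n\mathcal{L}_{V_n}(At_n)>0$; it has a cutoff if there exist $t_n>0$ with $\lim_n\mathcal{L}_{V_n}(at_n)=0$ for all $a>1$ and $\lim_n\mathcal{L}_{V_n}(at_n)=M$ for all $0<a<1$ (such $t_n$ is a cutoff time). *)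

theory Defs
  imports "HOL-Analysis.Analysis"
begin

text \<open>The class V: non-decreasing, right-continuous functions on (0,oo),
  tending to 0 at 0+ and having a finite limit at infinity.
  Functions are of type real => real; only values on (0,oo) matter.\<close>
definition classV :: "(real \<Rightarrow> real) \<Rightarrow> bool" where
  "classV V \<longleftrightarrow>
     mono_on {0<..} V \<and>
     (\<forall>x>0. continuous (at_right x) V) \<and>
     (V \<longlongrightarrow> 0) (at_right 0) \<and>
     (\<exists>L. (V \<longlongrightarrow> L) at_top)"

text \<open>Extension of V by 0 on (-oo,0]; this is monotone and right-continuous on R
  whenever V is in the class, so its Lebesgue--Stieltjes measure is interval_measure.\<close>
definition extV :: "(real \<Rightarrow> real) \<Rightarrow> real \<Rightarrow> real" where
  "extV V x = (if 0 < x then V x else 0)"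

definition LT :: "(real \<Rightarrow> real) \<Rightarrow> real \<Rightarrow> real" where
  "LT V t = (LINT x:{0<..}|interval_measure (extV V). exp (- t * x))"

definition pre_cutoff :: "(nat \<Rightarrow> real \<Rightarrow> real) \<Rightarrow> bool" where
  "pre_cutoff V \<longleftrightarrow> (\<exists>t A B. (\<forall>n. 0 < t n) \<and> 0 < A \<and> A < B \<and>
      (\<lambda>n. LT (V n) (B * t n)) \<longlonglongrightarrow> 0 \<and>
      liminf (\<lambda>n. ereal (LT (V n) (A * t n))) > 0)"

definition cutoff :: "(nat \<Rightarrow> real \<Rightarrow> real) \<Rightarrow> bool" where
  "cutoff V \<longleftrightarrow> (\<exists>t. (\<forall>n. 0 < t n) \<and>
      (\<forall>a>1. (\<lambda>n. LT (V n) (a * t n)) \<longlonglongrightarrow> 0) \<and>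
      (\<forall>a. 0 < a \<and> a < 1 \<longrightarrow>
         (\<lambda>n. ereal (LT (V n) (a * t n))) \<longlonglongrightarrow> limsup (\<lambda>n. ereal (LT (V n) 0))))"

end

theory Submission
  imports Defs
begin

text \<open>By Hoelder's inequality each transform \<open>LT V\<close> is nonnegative, nonincreasing and
  log-convex on \<open>[0, \<infinity>)\<close>. Suppose \<open>LT (V n) (B t\<^sub>n) \<rightarrow> 0\<close> while \<open>LT (V n) (A t\<^sub>n) \<ge> c > 0\<close>.
  Log-convexity between \<open>A/2\<close>, \<open>A\<close> and \<open>B\<close> forces \<open>LT (V n) (A t\<^sub>n / 2) \<rightarrow> \<infinity>\<close>, so a pre-cutoff
  already implies \<open>M = \<infinity>\<close>. Let \<open>r\<^sub>n\<close> be the last point of \<open>[A/2, B]\<close> at which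
  \<open>LT (V n) (\<cdot> t\<^sub>n) \<ge> 1\<close>. Interpolating log-convexly between a point just beyond \<open>r\<^sub>n\<close> (value \<open>< 1\<close>)
  and a far point (value \<open>\<rightarrow> 0\<close>) gives \<open>LT (V n) (a r\<^sub>n t\<^sub>n) \<rightarrow> 0\<close> for \<open>a > 1\<close>; interpolating between
  \<open>a r\<^sub>n\<close>, a point just before \<open>r\<^sub>n\<close> (value \<open>\<ge> 1\<close>) and \<open>B\<close> gives \<open>LT (V n) (a r\<^sub>n t\<^sub>n) \<rightarrow> \<infinity>\<close>
  for \<open>a < 1\<close>. Hence \<open>r\<^sub>n t\<^sub>n\<close> is a cutoff time. The converse is immediate.\<close>

section \<open>Nonincreasing log-convex families\<close>

text \<open>Zero values are allowed: since \<open>0 powr a = 0\<close>, the inequality expresses convexity of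
  \<open>ln \<circ> f\<close> with \<open>ln 0 = -\<infinity>\<close>.\<close>
definition log_convex_on :: "real set \<Rightarrow> (real \<Rightarrow> real) \<Rightarrow> bool" where
  "log_convex_on S f \<longleftrightarrow>
     (\<forall>x\<in>S. \<forall>y\<in>S. \<forall>\<theta>. 0 < \<theta> \<and> \<theta> < 1 \<longrightarrow>
        f (\<theta> * x + (1 - \<theta>) * y) \<le> f x powr \<theta> * f y powr (1 - \<theta>))"

lemma log_convex_onD:
  "log_convex_on S f \<Longrightarrow> x \<in> S \<Longrightarrow> y \<in> S \<Longrightarrow> 0 < \<theta> \<Longrightarrow> \<theta> < 1 \<Longrightarrow>
     f (\<theta> * x + (1 - \<theta>) * y) \<le> f x powr \<theta> * f y powr (1 - \<theta>)"
  by (simp add: log_convex_on_def)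

lemma log_convex_on_scale:
  assumes "log_convex_on {0..} f" "0 \<le> t"
  shows "log_convex_on {0..} (\<lambda>s. f (s * t))"
  unfolding log_convex_on_def
proof (intro ballI allI impI)
  fix x y \<theta> :: real
  assume "x \<in> {0..}" "y \<in> {0..}" "0 < \<theta> \<and> \<theta> < 1"
  moreover have "(\<theta> * x + (1 - \<theta>) * y) * t = \<theta> * (x * t) + (1 - \<theta>) * (y * t)"
    by algebra
  ultimately show "f ((\<theta> * x + (1 - \<theta>) * y) * t) \<le> f (x * t) powr \<theta> * f (y * t) powr (1 - \<theta>)"
    using assms by (simp add: log_convex_onD)
qed

lemma antimono_on_scale:
  fixes f :: "real \<Rightarrow> real" and t :: real
  assumes "antimono_on {0..} f" "0 \<le> t"
  shows "antimono_on {0..} (\<lambda>s. f (s * t))"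
proof (intro monotone_onI)
  fix x y :: real
  assume "x \<in> {0..}" "y \<in> {0..}" "x \<le> y"
  then show "f (y * t) \<le> f (x * t)"
    using assms by (intro monotone_onD[OF assms(1)]) (auto intro: mult_right_mono)
qed

lemma log_convex_on_interpolate:
  fixes f :: "real \<Rightarrow> real"
  assumes f: "log_convex_on {0..} f" and xyz: "0 \<le> x" "x < y" "y < z"
    and fz: "0 \<le> f z" "f z \<le> 1" and k: "k \<le> (y - x) / z"
  shows "\<exists>\<theta>. 0 < \<theta> \<and> \<theta> < 1 \<and> f y \<le> f x powr \<theta> * f z powr k"
proof -
  define \<theta> where "\<theta> = (z - y) / (z - x)"
  have \<theta>: "0 < \<theta>" "\<theta> < 1" using xyz by (auto simp: \<theta>_def field_simps)
  have \<theta>z: "\<theta> * (z - x) = z - y" using xyz by (simp add: \<theta>_def)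
  then have y: "y = \<theta> * x + (1 - \<theta>) * z" by (simp add: algebra_simps)
  have \<theta>': "1 - \<theta> = (y - x) / (z - x)" using xyz \<theta>z by (simp add: field_simps)
  have "(y - x) / z \<le> (y - x) / (z - x)" using xyz by (intro divide_left_mono) auto
  also have "\<dots> = 1 - \<theta>" by (rule \<theta>'[symmetric])
  finally have "f z powr (1 - \<theta>) \<le> f z powr k" using k fz by (intro powr_mono') auto
  then have "f x powr \<theta> * f z powr (1 - \<theta>) \<le> f x powr \<theta> * f z powr k"
    by (simp add: mult_left_mono)
  moreover have "f y \<le> f x powr \<theta> * f z powr (1 - \<theta>)"
    using log_convex_onD[OF f, of x z \<theta>] xyz \<theta> y by simp
  ultimately show ?thesis using \<theta> by (blast intro: order_trans)
qed

lemma powr_le_max_1: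
  fixes x \<theta> :: real
  assumes "0 \<le> x" "0 \<le> \<theta>" "\<theta> \<le> 1"
  shows "x powr \<theta> \<le> max x 1"
proof (cases "x \<le> 1")
  case True
  then show ?thesis using assms powr_le1[of \<theta> x] by simp
next
  case False
  then show ?thesis using assms powr_mono[of \<theta> 1 x] by simp
qed

lemma filterlim_at_top_powr_interpolation:
  fixes g h :: "nat \<Rightarrow> real"
  assumes g: "g \<longlonglongrightarrow> 0" "eventually (\<lambda>n. 0 \<le> g n) sequentially"
    and h: "eventually (\<lambda>n. 0 \<le> h n) sequentially" and "0 < k" "0 < c"
    and bound: "eventually (\<lambda>n. \<exists>\<theta>. 0 \<le> \<theta> \<and> \<theta> \<le> 1 \<and> c \<le> h n powr \<theta> * g n powr k) sequentially"
  shows "filterlim h at_top sequentially"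
  unfolding filterlim_at_top
proof
  fix Z :: real
  define R where "R = max Z 1"
  have "(\<lambda>n. R * g n powr k) \<longlonglongrightarrow> 0"
    using tendsto_mult_right_zero[OF tendsto_zero_powrI[OF g(1) tendsto_const g(2) \<open>0 < k\<close>]] .
  then have "eventually (\<lambda>n. R * g n powr k < c) sequentially"
    using \<open>0 < c\<close> by (rule order_tendstoD)
  with h bound show "eventually (\<lambda>n. Z \<le> h n) sequentially"
  proof eventually_elim
    case (elim n)
    then obtain \<theta> where \<theta>: "0 \<le> \<theta>" "\<theta> \<le> 1" "c \<le> h n powr \<theta> * g n powr k" by blast
    have "h n powr \<theta> * g n powr k \<le> max (h n) 1 * g n powr k"
      using powr_le_max_1[OF elim(1) \<theta>(1,2)] by (simp add: mult_right_mono)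
    with \<theta>(3) elim(3) have "R * g n powr k < max (h n) 1 * g n powr k" by linarith
    then have "R < max (h n) 1" by (rule mult_right_less_imp_less) simp
    then show ?case unfolding R_def by linarith
  qed
qed

lemma log_convex_family_tendsto_top:
  fixes F :: "nat \<Rightarrow> real \<Rightarrow> real" and x y :: "nat \<Rightarrow> real"
  assumes nonneg: "\<And>n s. 0 \<le> s \<Longrightarrow> 0 \<le> F n s" and lc: "\<And>n. log_convex_on {0..} (F n)"
    and Fz: "(\<lambda>n. F n z) \<longlonglongrightarrow> 0" and "0 < k" "0 < c"
    and ev: "eventually (\<lambda>n. 0 \<le> x n \<and> x n < y n \<and> y n < z \<and> k \<le> (y n - x n) / z \<and>
                              c \<le> F n (y n)) sequentially"
  shows "filterlim (\<lambda>n. F n (x n)) at_top sequentially"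
proof (rule filterlim_at_top_powr_interpolation[OF Fz _ _ \<open>0 < k\<close> \<open>0 < c\<close>])
  show "eventually (\<lambda>n. 0 \<le> F n z) sequentially" "eventually (\<lambda>n. 0 \<le> F n (x n)) sequentially"
    using ev by (eventually_elim, simp add: nonneg)+
  have "eventually (\<lambda>n. F n z < 1) sequentially" using Fz by (rule order_tendstoD) simp
  with ev show "eventually (\<lambda>n. \<exists>\<theta>. 0 \<le> \<theta> \<and> \<theta> \<le> 1 \<and> c \<le> F n (x n) powr \<theta> * F n z powr k)
    sequentially"
  proof eventually_elim
    case (elim n)
    then obtain \<theta> where "0 < \<theta>" "\<theta> < 1" "F n (y n) \<le> F n (x n) powr \<theta> * F n z powr k"
      using log_convex_on_interpolate[OF lc[of n], of "x n" "y n" z k] nonneg[of z n] by auto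
    with elim show ?case by (intro exI[of _ \<theta>]) auto
  qed
qed

lemma log_convex_family_tendsto_zero:
  fixes F :: "nat \<Rightarrow> real \<Rightarrow> real" and x y :: "nat \<Rightarrow> real"
  assumes nonneg: "\<And>n s. 0 \<le> s \<Longrightarrow> 0 \<le> F n s" and lc: "\<And>n. log_convex_on {0..} (F n)"
    and Fz: "(\<lambda>n. F n z) \<longlonglongrightarrow> 0" and "0 < k"
    and ev: "eventually (\<lambda>n. 0 \<le> x n \<and> x n < y n \<and> y n < z \<and> k \<le> (y n - x n) / z \<and>
                              F n (x n) \<le> 1) sequentially"
  shows "(\<lambda>n. F n (y n)) \<longlonglongrightarrow> 0"
proof (rule tendsto_sandwich[OF _ _ tendsto_const])
  have Fz_nonneg: "eventually (\<lambda>n. 0 \<le> F n z) sequentially"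
    using ev by eventually_elim (simp add: nonneg)
  show "(\<lambda>n. F n z powr k) \<longlonglongrightarrow> 0" by (rule tendsto_zero_powrI[OF Fz tendsto_const Fz_nonneg \<open>0 < k\<close>])
  show "eventually (\<lambda>n. 0 \<le> F n (y n)) sequentially"
    using ev by eventually_elim (simp add: nonneg)
  have "eventually (\<lambda>n. F n z < 1) sequentially" using Fz by (rule order_tendstoD) simp
  with ev Fz_nonneg show "eventually (\<lambda>n. F n (y n) \<le> F n z powr k) sequentially"
  proof eventually_elim
    case (elim n)
    then obtain \<theta> where \<theta>: "0 < \<theta>" "F n (y n) \<le> F n (x n) powr \<theta> * F n z powr k"
      using log_convex_on_interpolate[OF lc[of n], of "x n" "y n" z k] by auto
    have "F n (x n) powr \<theta> \<le> 1" using elim nonneg[of "x n" n] \<theta>(1) by (intro powr_le1) auto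
    then have "F n (x n) powr \<theta> * F n z powr k \<le> F n z powr k" by (simp add: mult_left_le_one_le)
    with \<theta>(2) show ?case by linarith
  qed
qed

lemma antimono_on_crossing:
  fixes f :: "real \<Rightarrow> real"
  assumes f: "antimono_on {0..} f" and pq: "0 \<le> p" "p \<le> q"
  shows "\<exists>r\<in>{p..q}. (1 \<le> f p \<longrightarrow> (\<forall>x\<in>{0..<r}. 1 \<le> f x)) \<and> (f q < 1 \<longrightarrow> (\<forall>x>r. f x < 1))"
proof -
  define S where "S = insert p {x\<in>{p..q}. 1 \<le> f x}"
  define r where "r = Sup S"
  have bdd: "bdd_above S" unfolding S_def using pq by (auto intro: bdd_aboveI[of _ q])
  have r: "r \<in> {p..q}" unfolding r_def using bdd pq by (auto intro!: cSup_upper cSup_least simp: S_def)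
  have "1 \<le> f x" if "1 \<le> f p" "0 \<le> x" "x < r" for x
  proof -
    obtain y where "y \<in> S" "x < y" using less_cSupD[of S x] \<open>x < r\<close> by (auto simp: r_def S_def)
    then have "1 \<le> f y" "f y \<le> f x" using that f by (auto simp: S_def intro: monotone_onD)
    then show ?thesis by linarith
  qed
  moreover have "f x < 1" if "f q < 1" "r < x" for x
  proof (cases "x \<le> q")
    case True
    have "x \<notin> S" using \<open>r < x\<close> cSup_upper[OF _ bdd] by (force simp: r_def)
    then show ?thesis using True r \<open>r < x\<close> by (auto simp: S_def)
  next
    case False
    then have "f x \<le> f q" using f pq by (auto intro: monotone_onD)
    with that show ?thesis by linarith
  qed
  ultimately show ?thesis using r by (intro bexI[of _ r]) auto
qed

lemma log_convex_family_tendsto_zero_beyond_crossing: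
  fixes F :: "nat \<Rightarrow> real \<Rightarrow> real" and r :: "nat \<Rightarrow> real"
  assumes nonneg: "\<And>n s. 0 \<le> s \<Longrightarrow> 0 \<le> F n s"
    and anti: "\<And>n. antimono_on {0..} (F n)" and lc: "\<And>n. log_convex_on {0..} (F n)"
    and FB: "(\<lambda>n. F n B) \<longlonglongrightarrow> 0" and r: "\<And>n. r n \<in> {\<rho>..B}" and "0 < \<rho>"
    and below_1: "eventually (\<lambda>n. \<forall>x>r n. F n x < 1) sequentially" and "1 < a"
  shows "(\<lambda>n. F n (a * r n)) \<longlonglongrightarrow> 0"
proof -
  define D where "D = (a + 1) * B"
  have "0 < B" using r[of 0] \<open>0 < \<rho>\<close> by simp
  then have "0 < D" "B \<le> D" using \<open>1 < a\<close> by (simp add: D_def, simp add: D_def algebra_simps)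
  have FD: "(\<lambda>n. F n D) \<longlonglongrightarrow> 0"
  proof (rule tendsto_sandwich[OF _ _ tendsto_const FB])
    show "eventually (\<lambda>n. 0 \<le> F n D) sequentially" using \<open>0 < D\<close> by (simp add: nonneg)
    have "F n D \<le> F n B" for n
      using \<open>B \<le> D\<close> \<open>0 < D\<close> r[of n] \<open>0 < \<rho>\<close> by (intro monotone_onD[OF anti]) auto
    then show "eventually (\<lambda>n. F n D \<le> F n B) sequentially" by simp
  qed
  show ?thesis
  proof (rule log_convex_family_tendsto_zero[OF nonneg lc FD, where x = "\<lambda>n. (1 + a) / 2 * r n"
        and y = "\<lambda>n. a * r n" and k = "(a - 1) * \<rho> / (2 * D)"])
    show "0 < (a - 1) * \<rho> / (2 * D)" using \<open>0 < \<rho>\<close> \<open>0 < D\<close> \<open>1 < a\<close> by simp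
    show "eventually (\<lambda>n. 0 \<le> (1 + a) / 2 * r n \<and> (1 + a) / 2 * r n < a * r n \<and> a * r n < D \<and>
        (a - 1) * \<rho> / (2 * D) \<le> (a * r n - (1 + a) / 2 * r n) / D \<and> F n ((1 + a) / 2 * r n) \<le> 1)
      sequentially"
      using below_1
    proof eventually_elim
      case (elim n)
      have r_pos: "0 < r n" using r[of n] \<open>0 < \<rho>\<close> by simp
      have "a * r n \<le> a * B" using r[of n] \<open>1 < a\<close> by simp
      then have "a * r n < D" using r_pos r[of n] by (simp add: D_def algebra_simps)
      moreover have "(a - 1) * \<rho> / 2 / D \<le> (a - 1) * r n / 2 / D"
        using r[of n] \<open>1 < a\<close> \<open>0 < D\<close> by (intro divide_right_mono) auto
      moreover have "r n < (1 + a) / 2 * r n" using r_pos \<open>1 < a\<close> by (simp add: field_simps)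
      then have "F n ((1 + a) / 2 * r n) < 1" using elim by blast
      ultimately show ?case using r_pos \<open>1 < a\<close> by (simp add: field_simps)
    qed
  qed
qed

lemma log_convex_family_tendsto_top_before_crossing:
  fixes F :: "nat \<Rightarrow> real \<Rightarrow> real" and r :: "nat \<Rightarrow> real"
  assumes nonneg: "\<And>n s. 0 \<le> s \<Longrightarrow> 0 \<le> F n s" and lc: "\<And>n. log_convex_on {0..} (F n)"
    and FB: "(\<lambda>n. F n B) \<longlonglongrightarrow> 0" and r: "\<And>n. r n \<in> {\<rho>..B}" and "0 < \<rho>"
    and above_1: "eventually (\<lambda>n. \<forall>x\<in>{0..<r n}. 1 \<le> F n x) sequentially" and "0 < a" "a < 1"
  shows "filterlim (\<lambda>n. F n (a * r n)) at_top sequentially"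
proof (rule log_convex_family_tendsto_top[OF nonneg lc FB _ zero_less_one,
      where y = "\<lambda>n. (1 + a) / 2 * r n" and k = "(1 - a) * \<rho> / (2 * B)"])
  have "0 < B" using r[of 0] \<open>0 < \<rho>\<close> by simp
  then show "0 < (1 - a) * \<rho> / (2 * B)" using \<open>0 < \<rho>\<close> \<open>a < 1\<close> by simp
  show "eventually (\<lambda>n. 0 \<le> a * r n \<and> a * r n < (1 + a) / 2 * r n \<and> (1 + a) / 2 * r n < B \<and>
      (1 - a) * \<rho> / (2 * B) \<le> ((1 + a) / 2 * r n - a * r n) / B \<and> 1 \<le> F n ((1 + a) / 2 * r n))
    sequentially"
    using above_1
  proof eventually_elim
    case (elim n)
    have r_pos: "0 < r n" using r[of n] \<open>0 < \<rho>\<close> by simp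
    have mid: "(1 + a) / 2 * r n < r n" using r_pos \<open>a < 1\<close> by (simp add: field_simps)
    then have "1 \<le> F n ((1 + a) / 2 * r n)" using elim r_pos \<open>0 < a\<close> by simp
    moreover have "(1 + a) / 2 * r n < B" using mid r[of n] by auto
    moreover have "(1 - a) * \<rho> / 2 / B \<le> (1 - a) * r n / 2 / B"
      using r[of n] \<open>a < 1\<close> \<open>0 < B\<close> by (intro divide_right_mono) auto
    ultimately show ?case using r_pos \<open>0 < a\<close> \<open>a < 1\<close> by (simp add: field_simps)
  qed
qed

lemma log_convex_family_sharp_threshold:
  fixes F :: "nat \<Rightarrow> real \<Rightarrow> real"
  assumes nonneg: "\<And>n s. 0 \<le> s \<Longrightarrow> 0 \<le> F n s"
    and anti: "\<And>n. antimono_on {0..} (F n)" and lc: "\<And>n. log_convex_on {0..} (F n)"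
    and AB: "0 < A" "A < B" and FB: "(\<lambda>n. F n B) \<longlonglongrightarrow> 0"
    and "0 < c" and FA: "eventually (\<lambda>n. c \<le> F n A) sequentially"
  obtains r where "\<And>n. 0 < r n"
    and "\<And>a. 1 < a \<Longrightarrow> (\<lambda>n. F n (a * r n)) \<longlonglongrightarrow> 0"
    and "\<And>a. 0 < a \<Longrightarrow> a < 1 \<Longrightarrow> filterlim (\<lambda>n. F n (a * r n)) at_top sequentially"
proof -
  have "filterlim (\<lambda>n. F n (A / 2)) at_top sequentially"
    using AB FA
    by (intro log_convex_family_tendsto_top[OF nonneg lc FB _ \<open>0 < c\<close>, where y = "\<lambda>_. A"
          and k = "A / 2 / B"]) (auto simp: field_simps elim!: eventually_mono)
  then have F_half_ge_1: "eventually (\<lambda>n. 1 \<le> F n (A / 2)) sequentially"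
    by (simp add: filterlim_at_top)
  have F_B_lt_1: "eventually (\<lambda>n. F n B < 1) sequentially"
    using FB by (rule order_tendstoD) simp
  have "\<forall>n. \<exists>r\<in>{A / 2..B}. (1 \<le> F n (A / 2) \<longrightarrow> (\<forall>x\<in>{0..<r}. 1 \<le> F n x)) \<and>
                             (F n B < 1 \<longrightarrow> (\<forall>x>r. F n x < 1))"
    using AB by (intro allI antimono_on_crossing[OF anti]) auto
  then obtain r where r: "\<And>n. r n \<in> {A / 2..B}"
    and r_left: "\<And>n. 1 \<le> F n (A / 2) \<Longrightarrow> \<forall>x\<in>{0..<r n}. 1 \<le> F n x"
    and r_right: "\<And>n. F n B < 1 \<Longrightarrow> \<forall>x>r n. F n x < 1"
    by metis
  have ev_right: "eventually (\<lambda>n. \<forall>x>r n. F n x < 1) sequentially"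
    using F_B_lt_1 by eventually_elim (rule r_right)
  have ev_left: "eventually (\<lambda>n. \<forall>x\<in>{0..<r n}. 1 \<le> F n x) sequentially"
    using F_half_ge_1 by eventually_elim (rule r_left)
  have "0 < A / 2" using AB by simp
  show ?thesis
  proof (rule that)
    show "0 < r n" for n using r[of n] AB by auto
    show "(\<lambda>n. F n (a * r n)) \<longlonglongrightarrow> 0" if "1 < a" for a
      by (rule log_convex_family_tendsto_zero_beyond_crossing[where r = r,
            OF nonneg anti lc FB r \<open>0 < A / 2\<close> ev_right that])
    show "filterlim (\<lambda>n. F n (a * r n)) at_top sequentially" if "0 < a" "a < 1" for a
      by (rule log_convex_family_tendsto_top_before_crossing[where r = r,
            OF nonneg lc FB r \<open>0 < A / 2\<close> ev_left that])
  qed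
qed

section \<open>The Laplace--Stieltjes transform\<close>

lemma classV_nonneg:
  assumes "classV V" "0 < x"
  shows "0 \<le> V x"
proof -
  have mono: "mono_on {0<..} V" and lim: "(V \<longlongrightarrow> 0) (at_right 0)"
    using assms(1) unfolding classV_def by auto
  have "eventually (\<lambda>y. V y \<le> V x) (at_right 0)"
    unfolding eventually_at_right_field using assms(2)
    by (intro exI[of _ x]) (auto intro: mono_onD[OF mono])
  then show ?thesis by (rule tendsto_upperbound[OF lim]) simp
qed

lemma classV_le_limit:
  assumes "classV V" "(V \<longlongrightarrow> L) at_top" "0 < x"
  shows "V x \<le> L"
proof -
  have mono: "mono_on {0<..} V" using assms(1) unfolding classV_def by auto
  have "eventually (\<lambda>y. V x \<le> V y) at_top"
    unfolding eventually_at_top_linorder using assms(3)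
    by (intro exI[of _ x]) (auto intro: mono_onD[OF mono])
  then show ?thesis by (rule tendsto_lowerbound[OF assms(2)]) simp
qed

lemma mono_extV:
  assumes "classV V"
  shows "mono (extV V)"
proof (rule monoI)
  fix x y :: real
  assume "x \<le> y"
  moreover have "mono_on {0<..} V" using assms unfolding classV_def by auto
  ultimately show "extV V x \<le> extV V y"
    using classV_nonneg[OF assms, of y] by (auto simp: extV_def intro: mono_onD)
qed

lemma continuous_at_right_extV:
  assumes "classV V"
  shows "continuous (at_right a) (extV V)"
proof -
  have "eventually (\<lambda>x. (if 0 \<le> a then V x else 0) = extV V x) (at_right a)"
    unfolding eventually_at_right_field by (intro exI[of _ "if 0 \<le> a then a + 1 else 0"]) (auto simp: extV_def)
  moreover have "((\<lambda>x. if 0 \<le> a then V x else 0) \<longlongrightarrow> extV V a) (at_right a)"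
    using assms by (cases "a = 0") (auto simp: classV_def extV_def continuous_within)
  ultimately show ?thesis
    unfolding continuous_within by (rule Lim_transform_eventually[rotated])
qed

lemma emeasure_extV_finite:
  assumes "classV V"
  shows "emeasure (interval_measure (extV V)) {0<..} < \<infinity>"
proof -
  let ?M = "interval_measure (extV V)"
  obtain L where L: "(V \<longlongrightarrow> L) at_top" using assms unfolding classV_def by auto
  have "(\<Union>k. {0<..real k}) = {0<..}" by (auto intro: real_arch_simple)
  then have "emeasure ?M {0<..} = (SUP k. emeasure ?M {0<..real k})"
    by (subst SUP_emeasure_incseq) (auto simp: incseq_def)
  also have "\<dots> \<le> ennreal L"
  proof (rule SUP_least)
    fix k :: nat
    have "emeasure ?M {0<..real k} = ennreal (extV V (real k) - extV V 0)"
      using assms by (intro emeasure_interval_measure_Ioc)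
        (auto intro: monoD[OF mono_extV] continuous_at_right_extV)
    also have "\<dots> \<le> ennreal L"
      using classV_le_limit[OF assms L, of "real k"] classV_le_limit[OF assms L, of 1]
        classV_nonneg[OF assms, of 1]
      by (intro ennreal_leI) (auto simp: extV_def)
    finally show "emeasure ?M {0<..real k} \<le> ennreal L" .
  qed
  finally show ?thesis by (simp add: le_less_trans)
qed

definition laplace_kernel :: "real \<Rightarrow> real \<Rightarrow> real" where
  "laplace_kernel t x = indicator {0<..} x * exp (- t * x)"

lemma laplace_kernel_measurable [measurable]:
  "laplace_kernel t \<in> borel_measurable (interval_measure F)"
  unfolding laplace_kernel_def by measurable

lemma LT_eq_integral_laplace_kernel:
  "LT V t = (\<integral>x. laplace_kernel t x \<partial>interval_measure (extV V))"
  unfolding LT_def set_lebesgue_integral_def laplace_kernel_def by simp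

lemma integrable_laplace_kernel:
  assumes "classV V" "0 \<le> t"
  shows "integrable (interval_measure (extV V)) (laplace_kernel t)"
proof (rule Bochner_Integration.integrable_bound)
  show "integrable (interval_measure (extV V)) (indicator {0<..} :: real \<Rightarrow> real)"
    using emeasure_extV_finite[OF assms(1)] by (intro integrable_real_indicator) auto
  show "AE x in interval_measure (extV V). norm (laplace_kernel t x) \<le> norm (indicator {0<..} x :: real)"
    using assms(2) by (auto simp: laplace_kernel_def indicator_def mult_nonneg_nonpos)
qed simp

lemma LT_nonneg: "0 \<le> LT V t"
  unfolding LT_eq_integral_laplace_kernel
  by (rule integral_nonneg_AE) (simp add: laplace_kernel_def)

lemma antimono_on_LT:
  assumes "classV V"
  shows "antimono_on {0..} (LT V)"
proof (rule monotone_onI)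
  fix s t :: real
  assume "s \<in> {0..}" "t \<in> {0..}" "s \<le> t"
  then show "LT V t \<le> LT V s"
    unfolding LT_eq_integral_laplace_kernel using assms
    by (intro integral_mono integrable_laplace_kernel)
      (auto simp: laplace_kernel_def indicator_def mult_right_mono)
qed

lemma LT_eq_0_imp_LT_eq_0:
  assumes "classV V" "0 \<le> s" "LT V s = 0"
  shows "LT V t = 0"
proof -
  let ?M = "interval_measure (extV V)"
  have "AE x in ?M. 0 \<le> laplace_kernel s x" by (simp add: laplace_kernel_def)
  then have "AE x in ?M. laplace_kernel s x = 0"
    using assms(3) integral_nonneg_eq_0_iff_AE[OF integrable_laplace_kernel[OF assms(1,2)]]
    by (simp add: LT_eq_integral_laplace_kernel)
  then have "AE x in ?M. laplace_kernel t x = 0"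
    by eventually_elim (simp add: laplace_kernel_def indicator_def split: if_splits)
  then show ?thesis
    unfolding LT_eq_integral_laplace_kernel by (simp add: integral_eq_zero_AE)
qed

lemma log_convex_on_LT:
  assumes V: "classV V"
  shows "log_convex_on {0..} (LT V)"
  unfolding log_convex_on_def
proof (intro ballI allI impI)
  fix s1 s2 \<theta> :: real
  assume s: "s1 \<in> {0..}" "s2 \<in> {0..}" and \<theta>: "0 < \<theta> \<and> \<theta> < 1"
  let ?M = "interval_measure (extV V)" and ?s = "\<theta> * s1 + (1 - \<theta>) * s2"
  show "LT V ?s \<le> LT V s1 powr \<theta> * LT V s2 powr (1 - \<theta>)"
  proof (cases "LT V s1 = 0 \<or> LT V s2 = 0")
    case True
    then have "LT V ?s = 0" using LT_eq_0_imp_LT_eq_0[OF V] s by blast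
    then show ?thesis by simp
  next
    case False
    define X Y where "X = LT V s1" and "Y = LT V s2"
    define C where "C = X powr \<theta> * Y powr (1 - \<theta>)"
    have X: "0 < X" and Y: "0 < Y" using False LT_nonneg[of V] by (auto simp: X_def Y_def less_le)
    \<comment> \<open>Young's inequality for the kernels normalised by \<open>X\<close> and \<open>Y\<close>; integrated, it is Hoelder's inequality.\<close>
    have pointwise: "laplace_kernel ?s x \<le>
        C * (\<theta> * (laplace_kernel s1 x / X) + (1 - \<theta>) * (laplace_kernel s2 x / Y))" for x
    proof (cases "0 < x")
      case True
      let ?u = "exp (- s1 * x) / X" and ?v = "exp (- s2 * x) / Y"
      have "exp (- ?s * x) = exp (- s1 * x) powr \<theta> * exp (- s2 * x) powr (1 - \<theta>)"
        by (simp add: powr_def exp_add[symmetric] algebra_simps)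
      also have "\<dots> = C * (?u powr \<theta> * ?v powr (1 - \<theta>))"
        using X Y by (simp add: C_def powr_divide)
      also have "\<dots> \<le> C * (\<theta> * ?u + (1 - \<theta>) * ?v)"
        using X Y \<theta> by (intro mult_left_mono Youngs_inequality_0) (auto simp: C_def)
      finally show ?thesis using True by (simp only: laplace_kernel_def indicator_simps) simp
    qed (simp add: laplace_kernel_def)
    have i1: "integrable ?M (laplace_kernel s1)" and i2: "integrable ?M (laplace_kernel s2)"
      using s by (auto intro: integrable_laplace_kernel[OF V])
    have "LT V ?s \<le> (\<integral>x. C * (\<theta> * (laplace_kernel s1 x / X) + (1 - \<theta>) * (laplace_kernel s2 x / Y)) \<partial>?M)"
      unfolding LT_eq_integral_laplace_kernel using s \<theta> pointwise
      by (intro integral_mono integrable_laplace_kernel[OF V]) (auto simp: i1 i2)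
    also have "\<dots> = C * (\<theta> * (X / X) + (1 - \<theta>) * (Y / Y))"
      using i1 i2 by (simp add: X_def Y_def LT_eq_integral_laplace_kernel)
    also have "\<dots> = C" using X Y by simp
    finally show ?thesis unfolding C_def X_def Y_def .
  qed
qed

section \<open>Pre-cutoff and cutoff\<close>

lemma pre_cutoff_sharp_threshold:
  assumes V: "\<And>n. classV (V n)" and "pre_cutoff V"
  obtains t where "\<And>n. 0 < t n"
    and "\<And>a. 1 < a \<Longrightarrow> (\<lambda>n. LT (V n) (a * t n)) \<longlonglongrightarrow> 0"
    and "\<And>a. 0 < a \<Longrightarrow> a < 1 \<Longrightarrow> filterlim (\<lambda>n. LT (V n) (a * t n)) at_top sequentially"
proof -
  obtain t A B where t: "\<And>n. 0 < t n" and AB: "0 < A" "A < B"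
    and LB: "(\<lambda>n. LT (V n) (B * t n)) \<longlonglongrightarrow> 0"
    and LA: "0 < liminf (\<lambda>n. ereal (LT (V n) (A * t n)))"
    using \<open>pre_cutoff V\<close> unfolding pre_cutoff_def by blast
  obtain c where "0 < ereal c" and c: "ereal c < liminf (\<lambda>n. ereal (LT (V n) (A * t n)))"
    using ereal_dense2[OF LA] by blast
  then have "0 < c" by simp
  define F where "F n s = LT (V n) (s * t n)" for n s
  have nonneg: "\<And>n s. 0 \<le> s \<Longrightarrow> 0 \<le> F n s" by (simp add: F_def LT_nonneg)
  have anti: "antimono_on {0..} (F n)" for n
    unfolding F_def using t by (intro antimono_on_scale antimono_on_LT V less_imp_le)
  have lc: "log_convex_on {0..} (F n)" for n
    unfolding F_def using t by (intro log_convex_on_scale log_convex_on_LT V less_imp_le)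
  have FB: "(\<lambda>n. F n B) \<longlonglongrightarrow> 0" using LB by (simp add: F_def)
  have FA: "eventually (\<lambda>n. c \<le> F n A) sequentially"
    using less_LiminfD[OF c] by eventually_elim (simp add: F_def)
  obtain r where "\<And>n. 0 < r n"
    and "\<And>a. 1 < a \<Longrightarrow> (\<lambda>n. F n (a * r n)) \<longlonglongrightarrow> 0"
    and "\<And>a. 0 < a \<Longrightarrow> a < 1 \<Longrightarrow> filterlim (\<lambda>n. F n (a * r n)) at_top sequentially"
    using log_convex_family_sharp_threshold[OF nonneg anti lc AB FB \<open>0 < c\<close> FA] by blast
  then show ?thesis
    using t by (intro that[of "\<lambda>n. r n * t n"]) (simp_all add: F_def mult.assoc)
qed

lemma pre_cutoff_imp_cutoff:
  assumes V: "\<And>n. classV (V n)" and "pre_cutoff V"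
  shows "cutoff V"
proof -
  obtain t where t: "\<And>n. 0 < t n"
    and beyond: "\<And>a. 1 < a \<Longrightarrow> (\<lambda>n. LT (V n) (a * t n)) \<longlonglongrightarrow> 0"
    and before: "\<And>a. 0 < a \<Longrightarrow> a < 1 \<Longrightarrow> filterlim (\<lambda>n. LT (V n) (a * t n)) at_top sequentially"
    using pre_cutoff_sharp_threshold[OF assms] by blast
  have "LT (V n) (1 / 2 * t n) \<le> LT (V n) 0" for n
    using t[of n] by (intro monotone_onD[OF antimono_on_LT[OF V]]) auto
  then have "filterlim (\<lambda>n. LT (V n) 0) at_top sequentially"
    by (intro filterlim_at_top_mono[OF before[of "1 / 2"]]) simp_all
  then have "limsup (\<lambda>n. ereal (LT (V n) 0)) = \<infinity>"
    by (intro lim_imp_Limsup) (simp_all add: tendsto_PInfty_eq_at_top)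
  then show "cutoff V"
    unfolding cutoff_def using t beyond before by (auto simp: tendsto_PInfty_eq_at_top)
qed

lemma cutoff_imp_pre_cutoff:
  assumes "limsup (\<lambda>n. ereal (LT (V n) 0)) > 0" and "cutoff V"
  shows "pre_cutoff V"
proof -
  obtain t where t: "\<forall>n. 0 < t n" and beyond: "\<forall>a>1. (\<lambda>n. LT (V n) (a * t n)) \<longlonglongrightarrow> 0"
    and before: "\<forall>a. 0 < a \<and> a < 1 \<longrightarrow>
      (\<lambda>n. ereal (LT (V n) (a * t n))) \<longlonglongrightarrow> limsup (\<lambda>n. ereal (LT (V n) 0))"
    using \<open>cutoff V\<close> unfolding cutoff_def by blast
  have "liminf (\<lambda>n. ereal (LT (V n) (1 / 2 * t n))) = limsup (\<lambda>n. ereal (LT (V n) 0))"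
    using before[rule_format, of "1 / 2"] by (intro lim_imp_Liminf) simp_all
  then show ?thesis
    unfolding pre_cutoff_def using t beyond assms(1)
    by (intro exI[of _ t] exI[of _ "1 / 2"] exI[of _ 2]) simp
qed

theorem theorem2p1:
  fixes V :: "nat \<Rightarrow> real \<Rightarrow> real"
  assumes "\<And>n. classV (V n)"
    and "limsup (\<lambda>n. ereal (LT (V n) 0)) > 0"
  shows "pre_cutoff V \<longleftrightarrow> cutoff V"
  using pre_cutoff_imp_cutoff[of V, OF assms(1)] cutoff_imp_pre_cutoff[OF assms(2)] by blast

end
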